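(* Let $X$ be a random variable with $\mathbb{E}X=0$ and $0<\mathbb{E}|X|^3<\infty$, and let $b>0$. Then for all $\lambda,\theta>0$, $$\mathbb{E}e^{\lambda bX-\theta(bX)^2}=1+(\lambda^2/2-\theta)b^2\mathbb{E}X^2+\alpha b^3\mathbb{E}X^3+\beta b^4\mathbb{E}X^4I_{\{|bX|\le1\}}+\gamma\big(b^3\mathbb{E}|X|^3I_{\{|bX|>1\}}+b^5\mathbb{E}|X|^5I_{\{|bX|\le1\}}\big)$$ $$\le\exp\Big\{(\lambda^2/2-\theta)b^2\mathbb{E}X^2+\alpha b^3\mathbb{E}X^3+\beta b^4\mathbb{E}X^4I_{\{|bX|\le1\}}+\gamma\big(b^3\mathbb{E}|X|^3I_{\{|bX|>1\}}+b^5\mathbb{E}|X|^5I_{\{|bX|\le1\}}\big)\Big\},$$ where $\alpha=\lambda^3/6-\lambda\theta$, $\beta=\theta^2/2-\lambda^2\theta/2+\lambda^4/24$, and $\gamma$ is a number with $|\gamma|\le\max(O^{(1)}_{\lambda,\theta},O^{(2)}_{\lambda,\theta})$, where $O^{(1)}_{\lambda,\theta}=e^{\lambda^2/(4\theta)}+\lambda+|\lambda^2/2-\theta|+|\lambda^3/6-\lambda\theta|$ and $O^{(2)}_{\lambda,\theta}=\tfrac16(3\lambda\theta^2+\theta^3)+\tfrac1{24}(4\lambda^3\theta+6\lambda^2\theta^2+4\lambda\theta^3+\theta^4)+e^{\lambda^2/(4\theta)}(\lambda+\theta)^5$. *)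

theory Defs
  imports "HOL-Probability.Probability"
begin

definition O1 :: "real \<Rightarrow> real \<Rightarrow> real" where
  "O1 lam \<theta> = exp (lam^2 / (4*\<theta>)) + lam + \<bar>lam^2/2 - \<theta>\<bar> + \<bar>lam^3/6 - lam*\<theta>\<bar>"

definition O2 :: "real \<Rightarrow> real \<Rightarrow> real" where
  "O2 lam \<theta> = (1/6) * (3*lam*\<theta>^2 + \<theta>^3)
     + (1/24) * (4*lam^3*\<theta> + 6*lam^2*\<theta>^2 + 4*lam*\<theta>^3 + \<theta>^4)
     + exp (lam^2 / (4*\<theta>)) * (lam + \<theta>)^5"

end

(*
  Put u = lam x - theta x^2 and K = exp (lam^2/(4 theta)); since u <= lam^2/(4 theta), both exp u
  and the Lagrange remainder of its Taylor expansion are controlled by K. For |x| <= 1 the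
  Taylor polynomial of degree 4 of exp (lam x - theta x^2) is accurate up to O2 |x|^5, for
  |x| > 1 the cubic one is accurate up to O1 |x|^3, simply because 0 < exp u <= K. Evaluating
  at x = b X and integrating, the error of the expansion is at most max O1 O2 times the
  expectation of the weight W multiplying gamma. That expectation is positive because
  E |X|^3 > 0, so gamma can be taken as the ratio of the two. Finally 1 + S <= exp S.
*)
theory Submission
  imports Defs
begin

(* Unlike Maclaurin_exp_le, which only gives |t| <= |u|, this keeps t between 0 and u. *)
lemma Maclaurin_exp_le_max:
  fixes u :: real
  assumes "0 < n"
  obtains t where "t \<le> max u 0" "exp u = (\<Sum>m<n. u^m / fact m) + exp t / fact n * u^n"
proof -
  consider "u = 0" | "u > 0" | "u < 0" by linarith
  then show ?thesis
  proof cases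
    case 1
    with Maclaurin_exp_le[of u n] show ?thesis by (auto intro: that)
  next
    case 2
    from Maclaurin[OF 2 assms, of "\<lambda>n. exp" exp] obtain t
      where "t < u" "exp u = (\<Sum>m<n. exp 0 / fact m * u^m) + exp t / fact n * u^n"
      by (auto intro: DERIV_exp)
    with 2 show ?thesis by (intro that[of t]) simp_all
  next
    case 3
    from Maclaurin_minus[OF 3 assms, of "\<lambda>n. exp" exp] obtain t
      where "t < 0" "exp u = (\<Sum>m<n. exp 0 / fact m * u^m) + exp t / fact n * u^n"
      by (auto intro: DERIV_exp)
    then show ?thesis by (intro that[of t]) simp_all
  qed
qed

lemma linear_minus_quadratic_le:
  fixes lam \<theta> x :: real
  assumes "\<theta> > 0"
  shows "lam*x - \<theta>*x^2 \<le> lam^2/(4*\<theta>)"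
proof -
  have "lam^2/(4*\<theta>) - (lam*x - \<theta>*x^2) = (2*\<theta>*x - lam)^2/(4*\<theta>)"
    using assms by (simp add: field_simps power2_eq_square)
  also have "\<dots> \<ge> 0" using assms by simp
  finally show ?thesis by simp
qed

lemma abs_mult_power_le_of_abs_le_1:
  fixes c x :: real
  assumes "\<bar>x\<bar> \<le> 1" "m \<le> n"
  shows "\<bar>c * x^n\<bar> \<le> \<bar>c\<bar> * \<bar>x\<bar>^m"
  using assms by (simp add: abs_mult power_abs mult_left_mono power_decreasing)

lemma abs_mult_power_le_of_abs_ge_1:
  fixes c x :: real
  assumes "1 \<le> \<bar>x\<bar>" "n \<le> m"
  shows "\<bar>c * x^n\<bar> \<le> \<bar>c\<bar> * \<bar>x\<bar>^m"
  using assms by (simp add: abs_mult power_abs mult_left_mono power_increasing)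

(* Taylor data at 0 of exp (lam x - theta x^2); "lq" refers to the linear-quadratic exponent. *)
definition exp_lq_taylor3 :: "real \<Rightarrow> real \<Rightarrow> real \<Rightarrow> real" where
  "exp_lq_taylor3 lam \<theta> x = 1 + lam*x + (lam^2/2 - \<theta>)*x^2 + (lam^3/6 - lam*\<theta>)*x^3"

definition exp_lq_coeff4 :: "real \<Rightarrow> real \<Rightarrow> real" where
  "exp_lq_coeff4 lam \<theta> = \<theta>^2/2 - lam^2*\<theta>/2 + lam^4/24"

(* The terms of degree 5 to 8 are the part of u^3/6 + u^4/24, u = lam x - theta x^2,
   beyond degree 4. *)
lemma exp_lq_Taylor4_remainder:
  fixes lam \<theta> x :: real
  assumes "\<theta> > 0"
  obtains t where "exp t \<le> exp (lam^2/(4*\<theta>))"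
    and "exp (lam*x - \<theta>*x^2) - (exp_lq_taylor3 lam \<theta> x + exp_lq_coeff4 lam \<theta> * x^4)
       = (lam*\<theta>^2/2 - lam^3*\<theta>/6) * x^5 + (lam^2*\<theta>^2/4 - \<theta>^3/6) * x^6
         + (- lam*\<theta>^3/6) * x^7 + (\<theta>^4/24) * x^8 + exp t / 120 * (lam*x - \<theta>*x^2)^5"
proof -
  define u where "u = lam*x - \<theta>*x^2"
  obtain t where t: "t \<le> max u 0" and exp_u: "exp u = (\<Sum>m<5. u^m / fact m) + exp t / fact 5 * u^5"
    using Maclaurin_exp_le_max[of 5 u] by auto
  have "0 \<le> lam^2/(4*\<theta>)" using assms by simp
  then have "t \<le> lam^2/(4*\<theta>)"
    using t linear_minus_quadratic_le[OF assms, of lam x] unfolding u_def by linarith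
  moreover have "(\<Sum>m<5. u^m / fact m) - (exp_lq_taylor3 lam \<theta> x + exp_lq_coeff4 lam \<theta> * x^4)
      = (lam*\<theta>^2/2 - lam^3*\<theta>/6) * x^5 + (lam^2*\<theta>^2/4 - \<theta>^3/6) * x^6
        + (- lam*\<theta>^3/6) * x^7 + (\<theta>^4/24) * x^8"
    unfolding u_def exp_lq_taylor3_def exp_lq_coeff4_def
    by (simp add: eval_nat_numeral fact_numeral field_simps)
  ultimately show ?thesis
    using exp_u unfolding u_def by (intro that) (simp_all add: fact_numeral, linarith)
qed

lemma abs_exp_lq_sub_taylor4_le:
  fixes lam \<theta> x :: real
  assumes "\<theta> > 0" "lam > 0" "\<bar>x\<bar> \<le> 1"
  shows "\<bar>exp (lam*x - \<theta>*x^2) - (exp_lq_taylor3 lam \<theta> x + exp_lq_coeff4 lam \<theta> * x^4)\<bar>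
    \<le> O2 lam \<theta> * \<bar>x\<bar>^5"
proof -
  define E where "E = exp (lam^2/(4*\<theta>))"
  obtain t where "exp t \<le> E" and expansion:
    "exp (lam*x - \<theta>*x^2) - (exp_lq_taylor3 lam \<theta> x + exp_lq_coeff4 lam \<theta> * x^4)
       = (lam*\<theta>^2/2 - lam^3*\<theta>/6) * x^5 + (lam^2*\<theta>^2/4 - \<theta>^3/6) * x^6
         + (- lam*\<theta>^3/6) * x^7 + (\<theta>^4/24) * x^8 + exp t / 120 * (lam*x - \<theta>*x^2)^5"
    using exp_lq_Taylor4_remainder[OF assms(1)] unfolding E_def by blast
  have "\<bar>lam*x - \<theta>*x^2\<bar> \<le> (lam + \<theta>) * \<bar>x\<bar>"
    using abs_mult_power_le_of_abs_le_1[OF assms(3), where m=1 and n=2 and c=\<theta>] assms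
    by (simp add: abs_mult algebra_simps order_trans[OF abs_triangle_ineq4])
  then have "\<bar>lam*x - \<theta>*x^2\<bar>^5 \<le> (lam + \<theta>)^5 * \<bar>x\<bar>^5"
    by (metis abs_ge_zero power_mono power_mult_distrib)
  moreover have "exp t / 120 \<le> E" using \<open>exp t \<le> E\<close> exp_gt_zero[of t] by linarith
  ultimately have "exp t / 120 * \<bar>lam*x - \<theta>*x^2\<bar>^5 \<le> E * ((lam + \<theta>)^5 * \<bar>x\<bar>^5)"
    by (intro mult_mono) (auto simp: E_def)
  then have remainder: "\<bar>exp t / 120 * (lam*x - \<theta>*x^2)^5\<bar> \<le> E * ((lam + \<theta>)^5 * \<bar>x\<bar>^5)"
    by (simp add: abs_mult power_abs)
  have power_bound: "\<bar>c * x^n\<bar> \<le> d * \<bar>x\<bar>^5" if "5 \<le> n" "\<bar>c\<bar> \<le> d" for c d n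
    using abs_mult_power_le_of_abs_le_1[OF assms(3) that(1), of c] that(2)
    by (meson abs_ge_zero mult_right_mono order_trans zero_le_power)
  have "\<bar>(lam*\<theta>^2/2 - lam^3*\<theta>/6) * x^5\<bar> \<le> (lam*\<theta>^2/2 + lam^3*\<theta>/6) * \<bar>x\<bar>^5"
    "\<bar>(lam^2*\<theta>^2/4 - \<theta>^3/6) * x^6\<bar> \<le> (lam^2*\<theta>^2/4 + \<theta>^3/6) * \<bar>x\<bar>^5"
    "\<bar>(- lam*\<theta>^3/6) * x^7\<bar> \<le> (lam*\<theta>^3/6) * \<bar>x\<bar>^5"
    "\<bar>(\<theta>^4/24) * x^8\<bar> \<le> (\<theta>^4/24) * \<bar>x\<bar>^5"
    by (rule power_bound; use assms(1,2) in \<open>simp add: abs_le_iff\<close>)+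
  moreover have "O2 lam \<theta> * \<bar>x\<bar>^5
      = (lam*\<theta>^2/2 + lam^3*\<theta>/6) * \<bar>x\<bar>^5 + (lam^2*\<theta>^2/4 + \<theta>^3/6) * \<bar>x\<bar>^5
        + (lam*\<theta>^3/6) * \<bar>x\<bar>^5 + (\<theta>^4/24) * \<bar>x\<bar>^5 + E * ((lam + \<theta>)^5 * \<bar>x\<bar>^5)"
    unfolding O2_def E_def by (simp add: algebra_simps)
  ultimately show ?thesis
    unfolding expansion using remainder by linarith
qed

lemma abs_exp_lq_sub_taylor3_le:
  fixes lam \<theta> x :: real
  assumes "\<theta> > 0" "lam > 0" "1 \<le> \<bar>x\<bar>"
  shows "\<bar>exp (lam*x - \<theta>*x^2) - exp_lq_taylor3 lam \<theta> x\<bar> \<le> O1 lam \<theta> * \<bar>x\<bar>^3"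
proof -
  define E where "E = exp (lam^2/(4*\<theta>))"
  have "exp (lam*x - \<theta>*x^2) \<le> E"
    unfolding E_def using linear_minus_quadratic_le[OF assms(1)] by simp
  moreover have "1 \<le> E" unfolding E_def using assms by simp
  ultimately have "\<bar>exp (lam*x - \<theta>*x^2) - 1\<bar> \<le> E"
    using exp_gt_zero[of "lam*x - \<theta>*x^2"] by linarith
  moreover have "E \<le> E * \<bar>x\<bar>^3"
    using \<open>1 \<le> E\<close> assms(3) by (simp add: one_le_power)
  moreover have "\<bar>lam * x\<bar> \<le> lam * \<bar>x\<bar>^3"
    using abs_mult_power_le_of_abs_ge_1[OF assms(3), where n=1 and m=3 and c=lam] assms(2) by simp
  moreover have "\<bar>(lam^2/2 - \<theta>) * x^2\<bar> \<le> \<bar>lam^2/2 - \<theta>\<bar> * \<bar>x\<bar>^3"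
    using abs_mult_power_le_of_abs_ge_1[OF assms(3), where n=2 and m=3] by simp
  moreover have "\<bar>(lam^3/6 - lam*\<theta>) * x^3\<bar> = \<bar>lam^3/6 - lam*\<theta>\<bar> * \<bar>x\<bar>^3"
    by (simp add: abs_mult power_abs)
  moreover have "O1 lam \<theta> * \<bar>x\<bar>^3 = E * \<bar>x\<bar>^3 + lam * \<bar>x\<bar>^3 + \<bar>lam^2/2 - \<theta>\<bar> * \<bar>x\<bar>^3
      + \<bar>lam^3/6 - lam*\<theta>\<bar> * \<bar>x\<bar>^3"
    unfolding O1_def E_def by (simp add: algebra_simps)
  moreover have "\<bar>exp (lam*x - \<theta>*x^2) - exp_lq_taylor3 lam \<theta> x\<bar>
      \<le> \<bar>exp (lam*x - \<theta>*x^2) - 1\<bar> + \<bar>lam * x\<bar> + \<bar>(lam^2/2 - \<theta>) * x^2\<bar>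
        + \<bar>(lam^3/6 - lam*\<theta>) * x^3\<bar>"
    unfolding exp_lq_taylor3_def by arith
  ultimately show ?thesis by simp
qed

lemma abs_exp_lq_sub_taylor_le:
  fixes lam \<theta> x :: real
  assumes "\<theta> > 0" "lam > 0"
  shows "\<bar>exp (lam*x - \<theta>*x^2)
      - (exp_lq_taylor3 lam \<theta> x + (if \<bar>x\<bar> \<le> 1 then exp_lq_coeff4 lam \<theta> * x^4 else 0))\<bar>
    \<le> max (O1 lam \<theta>) (O2 lam \<theta>) * (if \<bar>x\<bar> \<le> 1 then \<bar>x\<bar>^5 else \<bar>x\<bar>^3)"
proof (cases "\<bar>x\<bar> \<le> 1")
  case True
  have "O2 lam \<theta> * \<bar>x\<bar>^5 \<le> max (O1 lam \<theta>) (O2 lam \<theta>) * \<bar>x\<bar>^5"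
    by (intro mult_right_mono) auto
  with abs_exp_lq_sub_taylor4_le[OF assms True] True show ?thesis by simp
next
  case False
  have "O1 lam \<theta> * \<bar>x\<bar>^3 \<le> max (O1 lam \<theta>) (O2 lam \<theta>) * \<bar>x\<bar>^3"
    by (intro mult_right_mono) auto
  with abs_exp_lq_sub_taylor3_le[OF assms, of x] False show ?thesis by simp
qed

lemma abs_power_le_one_add_abs_power:
  fixes t :: real
  assumes "k \<le> n"
  shows "\<bar>t\<bar>^k \<le> 1 + \<bar>t\<bar>^n"
proof (cases "\<bar>t\<bar> \<le> 1")
  case True
  then have "\<bar>t\<bar>^k \<le> 1" by (simp add: power_le_one)
  then show ?thesis by (simp add: add_increasing2)
next
  case False
  then have "\<bar>t\<bar>^k \<le> \<bar>t\<bar>^n" using assms by (intro power_increasing) auto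
  then show ?thesis by simp
qed

lemma (in finite_measure) integrable_power_if_integrable_abs_power:
  fixes X :: "'a \<Rightarrow> real"
  assumes "X \<in> borel_measurable M" "integrable M (\<lambda>x. \<bar>X x\<bar>^n)" "k \<le> n"
  shows "integrable M (\<lambda>x. X x ^ k)"
  by (rule Bochner_Integration.integrable_bound[of _ "\<lambda>x. 1 + \<bar>X x\<bar>^n"])
     (use assms abs_power_le_one_add_abs_power in \<open>auto simp: power_abs\<close>)

lemma integrable_abs_power_mult_indicator_le:
  fixes X :: "'a \<Rightarrow> real"
  assumes "X \<in> borel_measurable M" "integrable M (\<lambda>x. \<bar>X x\<bar>^n)" "n \<le> k" "0 < b"
  shows "integrable M (\<lambda>x. \<bar>X x\<bar>^k * indicator {y. \<bar>b * X y\<bar> \<le> 1} x)"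
proof (rule Bochner_Integration.integrable_bound)
  show "integrable M (\<lambda>x. (1/b)^(k-n) * \<bar>X x\<bar>^n)" using assms(2) by simp
  have "\<bar>X x\<bar>^k \<le> (1/b)^(k-n) * \<bar>X x\<bar>^n" if "\<bar>b * X x\<bar> \<le> 1" for x
  proof -
    have "\<bar>X x\<bar> \<le> 1/b" using that assms(4) by (simp add: abs_mult field_simps)
    then have "\<bar>X x\<bar>^(k-n) \<le> (1/b)^(k-n)" by (intro power_mono) auto
    then have "\<bar>X x\<bar>^n * \<bar>X x\<bar>^(k-n) \<le> \<bar>X x\<bar>^n * (1/b)^(k-n)" by (intro mult_left_mono) auto
    then show ?thesis using assms(3) by (simp add: power_add[symmetric] mult.commute)
  qed
  then show "AE x in M. norm (\<bar>X x\<bar>^k * indicator {y. \<bar>b * X y\<bar> \<le> 1} x)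
      \<le> norm ((1/b)^(k-n) * \<bar>X x\<bar>^n)"
    using assms(4) by (intro AE_I2) (auto simp: indicator_def)
qed (use assms(1) in \<open>simp add: indicator_def\<close>)

lemma integrable_abs_power_mult_indicator_gt:
  fixes X :: "'a \<Rightarrow> real"
  assumes "X \<in> borel_measurable M" "integrable M (\<lambda>x. \<bar>X x\<bar>^n)"
  shows "integrable M (\<lambda>x. \<bar>X x\<bar>^n * indicator {y. 1 < \<bar>b * X y\<bar>} x)"
  by (rule Bochner_Integration.integrable_bound[OF assms(2)])
     (use assms(1) in \<open>auto simp: indicator_def\<close>)

lemma integral_pos_of_support_subset:
  fixes f g :: "'a \<Rightarrow> real"
  assumes "integrable M f" "\<And>x. 0 \<le> f x" "\<And>x. f x = 0 \<Longrightarrow> g x = 0"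
    and "(\<integral>x. g x \<partial>M) \<noteq> 0"
  shows "0 < (\<integral>x. f x \<partial>M)"
proof -
  have "(\<integral>x. f x \<partial>M) \<noteq> 0"
  proof
    assume "(\<integral>x. f x \<partial>M) = 0"
    then have "AE x in M. f x = 0" using integral_nonneg_eq_0_iff_AE[OF assms(1)] assms(2) by simp
    then have "AE x in M. g x = 0" by (auto intro: assms(3))
    then show False using assms(4) integral_eq_zero_AE by blast
  qed
  moreover have "0 \<le> (\<integral>x. f x \<partial>M)" using assms(2) by simp
  ultimately show ?thesis by simp
qed

lemma integral_eq_add_mult_integral_if_abs_diff_le:
  fixes f g w :: "'a \<Rightarrow> real"
  assumes "integrable M f" "integrable M g" "integrable M w"
    and "\<And>x. x \<in> space M \<Longrightarrow> \<bar>f x - g x\<bar> \<le> C * w x" and "0 < (\<integral>x. w x \<partial>M)"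
  obtains \<gamma> where "\<bar>\<gamma>\<bar> \<le> C" "(\<integral>x. f x \<partial>M) = (\<integral>x. g x \<partial>M) + \<gamma> * (\<integral>x. w x \<partial>M)"
proof
  define \<Delta> where "\<Delta> = (\<integral>x. f x - g x \<partial>M)"
  have "\<Delta> \<le> (\<integral>x. C * w x \<partial>M)" "(\<integral>x. - (C * w x) \<partial>M) \<le> \<Delta>"
    unfolding \<Delta>_def by (intro integral_mono; use assms(1-4) in \<open>force simp: abs_le_iff\<close>)+
  then show "\<bar>\<Delta> / (\<integral>x. w x \<partial>M)\<bar> \<le> C"
    using assms(5) by (simp add: abs_le_iff divide_le_eq)
  show "(\<integral>x. f x \<partial>M) = (\<integral>x. g x \<partial>M) + \<Delta> / (\<integral>x. w x \<partial>M) * (\<integral>x. w x \<partial>M)"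
    unfolding \<Delta>_def using assms(1,2,5) by simp
qed

lemma (in finite_measure) integrable_truncated_moments:
  fixes X :: "'a \<Rightarrow> real"
  assumes "X \<in> borel_measurable M" "integrable M (\<lambda>x. \<bar>X x\<bar>^3)" "0 < b"
  shows "integrable M X" "integrable M (\<lambda>x. (X x)^2)" "integrable M (\<lambda>x. (X x)^3)"
    and "integrable M (\<lambda>x. (X x)^4 * indicator {y. \<bar>b * X y\<bar> \<le> 1} x)"
    and "integrable M (\<lambda>x. \<bar>X x\<bar>^5 * indicator {y. \<bar>b * X y\<bar> \<le> 1} x)"
    and "integrable M (\<lambda>x. \<bar>X x\<bar>^3 * indicator {y. 1 < \<bar>b * X y\<bar>} x)"
  using integrable_power_if_integrable_abs_power[OF assms(1,2), of 1]
    integrable_power_if_integrable_abs_power[OF assms(1,2), of 2]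
    integrable_power_if_integrable_abs_power[OF assms(1,2), of 3]
    integrable_abs_power_mult_indicator_le[OF assms(1,2) _ assms(3), of 4]
    integrable_abs_power_mult_indicator_le[OF assms(1,2) _ assms(3), of 5]
    integrable_abs_power_mult_indicator_gt[OF assms(1,2)]
  by simp_all

lemma (in prob_space) expectation_exp_lq_expansion:
  fixes X :: "'a \<Rightarrow> real"
  assumes "X \<in> borel_measurable M" "integrable M (\<lambda>x. \<bar>X x\<bar>^3)"
    and "(\<integral>x. X x \<partial>M) = 0" "0 < (\<integral>x. \<bar>X x\<bar>^3 \<partial>M)"
    and "0 < b" "0 < lam" "0 < \<theta>"
  defines "I \<equiv> \<lambda>x. indicator {y. \<bar>b * X y\<bar> \<le> 1} x :: real"
    and "J \<equiv> \<lambda>x. indicator {y. 1 < \<bar>b * X y\<bar>} x :: real"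
  obtains \<gamma> where "\<bar>\<gamma>\<bar> \<le> max (O1 lam \<theta>) (O2 lam \<theta>)"
    and "(\<integral>x. exp (lam * b * X x - \<theta> * (b * X x)^2) \<partial>M)
      = 1 + (lam^2/2 - \<theta>) * b^2 * (\<integral>x. (X x)^2 \<partial>M)
        + (lam^3/6 - lam*\<theta>) * b^3 * (\<integral>x. (X x)^3 \<partial>M)
        + exp_lq_coeff4 lam \<theta> * b^4 * (\<integral>x. (X x)^4 * I x \<partial>M)
        + \<gamma> * (b^3 * (\<integral>x. \<bar>X x\<bar>^3 * J x \<partial>M) + b^5 * (\<integral>x. \<bar>X x\<bar>^5 * I x \<partial>M))"
proof -
  note X_measurable[measurable] = assms(1)
  note moments = integrable_truncated_moments[OF assms(1,2,5), folded I_def J_def]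
  define f where "f = (\<lambda>x. exp (lam * b * X x - \<theta> * (b * X x)^2))"
  define P where "P = (\<lambda>x. 1 + (lam*b) * X x + ((lam^2/2 - \<theta>)*b^2) * (X x)^2
    + ((lam^3/6 - lam*\<theta>)*b^3) * (X x)^3 + (exp_lq_coeff4 lam \<theta> * b^4) * ((X x)^4 * I x))"
  define W where "W = (\<lambda>x. b^3 * (\<bar>X x\<bar>^3 * J x) + b^5 * (\<bar>X x\<bar>^5 * I x))"
  have int_f: "integrable M f"
    by (rule integrable_const_bound[where B="exp (lam^2/(4*\<theta>))"])
       (use linear_minus_quadratic_le[OF assms(7), of lam "b * X _"] in \<open>auto simp: f_def mult.assoc\<close>)
  have int_P: "integrable M P" and int_W: "integrable M W"
    unfolding P_def W_def using moments by simp_all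
  have remainder: "\<bar>f x - P x\<bar> \<le> max (O1 lam \<theta>) (O2 lam \<theta>) * W x" for x
  proof -
    have "f x = exp (lam * (b * X x) - \<theta> * (b * X x)^2)" by (simp add: f_def mult.assoc)
    moreover have "P x = exp_lq_taylor3 lam \<theta> (b * X x)
        + (if \<bar>b * X x\<bar> \<le> 1 then exp_lq_coeff4 lam \<theta> * (b * X x)^4 else 0)"
      by (simp add: P_def I_def exp_lq_taylor3_def power_mult_distrib)
    moreover have "W x = (if \<bar>b * X x\<bar> \<le> 1 then \<bar>b * X x\<bar>^5 else \<bar>b * X x\<bar>^3)"
      using assms(5) by (simp add: W_def I_def J_def abs_mult power_mult_distrib)
    ultimately show ?thesis using abs_exp_lq_sub_taylor_le[OF assms(7,6), of "b * X x"] by (simp only:)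
  qed
  have "\<bar>X x\<bar>^3 = 0" if "W x = 0" for x
    using that assms(5) by (cases "\<bar>b * X x\<bar> \<le> 1") (auto simp: W_def I_def J_def)
  then have W_pos: "0 < (\<integral>x. W x \<partial>M)"
    using assms(4,5) moments
    by (intro integral_pos_of_support_subset[where g="\<lambda>x. \<bar>X x\<bar>^3"]) (auto simp: W_def I_def J_def)
  obtain \<gamma> where "\<bar>\<gamma>\<bar> \<le> max (O1 lam \<theta>) (O2 lam \<theta>)"
    and expansion: "(\<integral>x. f x \<partial>M) = (\<integral>x. P x \<partial>M) + \<gamma> * (\<integral>x. W x \<partial>M)"
    using integral_eq_add_mult_integral_if_abs_diff_le[OF int_f int_P int_W remainder W_pos] .
  moreover have "(\<integral>x. P x \<partial>M) = 1 + (lam^2/2 - \<theta>) * b^2 * (\<integral>x. (X x)^2 \<partial>M)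
      + (lam^3/6 - lam*\<theta>) * b^3 * (\<integral>x. (X x)^3 \<partial>M)
      + exp_lq_coeff4 lam \<theta> * b^4 * (\<integral>x. (X x)^4 * I x \<partial>M)"
    unfolding P_def using moments assms(3) by (simp add: prob_space)
  moreover have "(\<integral>x. W x \<partial>M) = b^3 * (\<integral>x. \<bar>X x\<bar>^3 * J x \<partial>M) + b^5 * (\<integral>x. \<bar>X x\<bar>^5 * I x \<partial>M)"
    unfolding W_def using moments by simp
  ultimately show ?thesis unfolding f_def by (intro that) (simp only:)+
qed

theorem lemma4p1:
  fixes M :: "'a measure" and X :: "'a \<Rightarrow> real" and b lam \<theta> :: real
  assumes "prob_space M"
    and "X \<in> borel_measurable M"
    and "integrable M (\<lambda>x. \<bar>X x\<bar> ^ 3)"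
    and "(\<integral>x. X x \<partial>M) = 0"
    and "(\<integral>x. \<bar>X x\<bar> ^ 3 \<partial>M) > 0"
    and "b > 0" and "lam > 0" and "\<theta> > 0"
  shows "\<exists>\<gamma>::real. \<bar>\<gamma>\<bar> \<le> max (O1 lam \<theta>) (O2 lam \<theta>) \<and>
    (let \<alpha> = lam^3/6 - lam*\<theta>;
         \<beta> = \<theta>^2/2 - lam^2*\<theta>/2 + lam^4/24;
         S = (lam^2/2 - \<theta>) * b^2 * (\<integral>x. (X x)^2 \<partial>M)
             + \<alpha> * b^3 * (\<integral>x. (X x)^3 \<partial>M)
             + \<beta> * b^4 * (\<integral>x. (X x)^4 * indicator {y. \<bar>b * X y\<bar> \<le> 1} x \<partial>M)
             + \<gamma> * (b^3 * (\<integral>x. \<bar>X x\<bar>^3 * indicator {y. \<bar>b * X y\<bar> > 1} x \<partial>M)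
                     + b^5 * (\<integral>x. \<bar>X x\<bar>^5 * indicator {y. \<bar>b * X y\<bar> \<le> 1} x \<partial>M))
     in (\<integral>x. exp (lam * b * X x - \<theta> * (b * X x)^2) \<partial>M) = 1 + S \<and> 1 + S \<le> exp S)"
proof -
  interpret prob_space M by fact
  show ?thesis
    by (rule expectation_exp_lq_expansion[OF assms(2-8)], rule exI, rule conjI, assumption)
       (simp add: Let_def exp_lq_coeff4_def add.assoc exp_ge_add_one_self)
qed

end
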